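(* Under the Standing Setup (see context), let $\{x^k\}$ be the sequence generated by Algorithm 1 and let $f^*:=\inf_{x\in B[\bar x,\beta]}f(x)$. Then $\{f(x^k)\}$ converges to $f^*$, and $\{x^k\}$ converges to a point $x^*$ with $f(x^* )=f^*$.
   Context: $B(x,r)$, $B[x,r]$: open and closed Euclidean balls. For $\mu>0$: $e_\mu f(x):=\min_y\{f(y)+\frac{1}{2\mu}\|y-x\|^2\}$ (Moreau envelope), $P_\mu f(x):=\operatorname{argmin}_y\{f(y)+\frac{1}{2\mu}\|y-x\|^2\}$ (proximal operator). $\partial f$: limiting subdifferential. $f$ is $\rho$-weakly convex on $U$ if $f(\alpha x+(1-\alpha)y)\le \alpha f(x)+(1-\alpha)f(y)+\frac{\rho\alpha(1-\alpha)}{2}\|x-y\|^2$ for all $x,y\in U$, $\alpha\in[0,1]$. Standing Fact (cited): if $f$ is $\rho$-weakly convex on $\mathbb{R}^n$, $\rho>0$, $0\in\partial f(\bar x)$ and $\mu\in(0,1/\rho)$, there is $\alpha>0$ such that on $B[\bar x,\alpha]$, $P_\mu f$ is single-valued, $1/(1-\mu\rho)$-Lipschitz, equal to $(I+\mu\partial f)^{-1}$, and $e_\mu f$ is $C^1$ with $\nabla e_\mu f(x)=\mu^{-1}(x-P_\mu f(x))$. Standing Setup: $f:\mathbb{R}^n\to\mathbb{R}\cup\{+\infty\}$ is proper, lower semicontinuous, bounded below and $\rho$-weakly convex on $\mathbb{R}^n$, $\rho>0$; $\bar x\in\operatorname{dom}f$ with $0\in\partial f(\bar x)$. Fix $\bar\lambda>0$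 and bounded sequences $\{\gamma_k\},\{\lambda_k\}$ with $0<\bar\lambda<2\gamma_k<\lambda_k<1/\rho$ for all $k$. Let $\delta>0$ be such that, for every $k$, the Standing Fact holds on $B[\bar x,\delta]$ for $\mu=\gamma_k$ and $\mu=\lambda_k$, and (Assumption 1) the Moreau envelopes $e_{\gamma_k}f$ and $e_{\lambda_k}f$ are convex on $B[\bar x,\delta]$. For each $k$ let $L_k:=1+\frac{\lambda_k-\gamma_k}{\gamma_k}\bigl(1+\frac{1}{1-\gamma_k\rho}\bigr)$, pick $\sigma_k\in(0,2/L_k^2)$, set $\kappa_k:=1-2\sigma_k+\sigma_k^2L_k^2$, and let $\beta>0$ satisfy $\beta<\min\{\delta,\frac{\delta}{\sigma_k}(1-\sqrt{\kappa_k})\}$ for all $k$. Algorithm 1: choose $x^0\in B[\bar x,\beta]$. Given $x^k\in B[\bar x,\beta]$: (a) compute $z^k\in B(\bar x,\delta)$ with $z^k=x^k-(\lambda_k-\gamma_k)\nabla e_{\gamma_k}f(z^k)$; (b) set $x^{k+1}=z^k-\gamma_k(\lambda_k-\gamma_k)^{-1}(x^k-z^k)$. *)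

theory Defs
  imports "HOL-Analysis.Analysis"
begin

text \<open>Extended-real valued functions f : R^n -> R \<union> {+\<infinity>} are modelled as
  functions into ereal that never take the value -\<infinity>.\<close>

definition proper_fun :: "('a \<Rightarrow> ereal) \<Rightarrow> bool" where
  "proper_fun f \<longleftrightarrow> (\<forall>x. f x \<noteq> -\<infinity>) \<and> (\<exists>x. f x \<noteq> \<infinity>)"

definition lsc_fun :: "('a::topological_space \<Rightarrow> ereal) \<Rightarrow> bool" where
  "lsc_fun f \<longleftrightarrow> (\<forall>x. \<forall>c. c < f x \<longrightarrow> eventually (\<lambda>y. c < f y) (at x))"

definition edom :: "('a \<Rightarrow> ereal) \<Rightarrow> 'a set" where
  "edom f = {x. f x < \<infinity>}"

text \<open>rho-weak convexity on a set U (ereal arithmetic, with 0 * \<infinity> = 0).\<close>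
definition weakly_convex_on :: "'a::real_normed_vector set \<Rightarrow> real \<Rightarrow> ('a \<Rightarrow> ereal) \<Rightarrow> bool" where
  "weakly_convex_on U \<rho> f \<longleftrightarrow>
     (\<forall>x\<in>U. \<forall>y\<in>U. \<forall>\<alpha>::real. 0 \<le> \<alpha> \<and> \<alpha> \<le> 1 \<longrightarrow>
        f (\<alpha> *\<^sub>R x + (1 - \<alpha>) *\<^sub>R y)
          \<le> ereal \<alpha> * f x + ereal (1 - \<alpha>) * f y
             + ereal (\<rho> * \<alpha> * (1 - \<alpha>) / 2 * (norm (x - y))\<^sup>2))"

definition frechet_subdiff :: "('a::real_inner \<Rightarrow> ereal) \<Rightarrow> 'a \<Rightarrow> 'a set" where
  "frechet_subdiff f x = {v. \<bar>f x\<bar> \<noteq> \<infinity> \<and>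
      (\<forall>\<epsilon>>0. \<exists>d>0. \<forall>y\<in>ball x d.
          ereal (real_of_ereal (f x) + inner v (y - x) - \<epsilon> * norm (y - x)) \<le> f y)}"

definition limiting_subdiff :: "('a::real_inner \<Rightarrow> ereal) \<Rightarrow> 'a \<Rightarrow> 'a set" where
  "limiting_subdiff f x = {v. \<exists>xs vs. xs \<longlonglongrightarrow> x \<and> (\<lambda>k. f (xs k)) \<longlonglongrightarrow> f x \<and>
      (\<forall>k. vs k \<in> frechet_subdiff f (xs k)) \<and> vs \<longlonglongrightarrow> v}"

definition moreau_env :: "('a::real_normed_vector \<Rightarrow> ereal) \<Rightarrow> real \<Rightarrow> 'a \<Rightarrow> ereal" where
  "moreau_env f \<mu> x = (INF y. f y + ereal ((norm (y - x))\<^sup>2 / (2 * \<mu>)))"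

definition prox :: "('a::real_normed_vector \<Rightarrow> ereal) \<Rightarrow> real \<Rightarrow> 'a \<Rightarrow> 'a set" where
  "prox f \<mu> x = {y. \<forall>z. f y + ereal ((norm (y - x))\<^sup>2 / (2 * \<mu>))
                        \<le> f z + ereal ((norm (z - x))\<^sup>2 / (2 * \<mu>))}"

text \<open>Real-valued version of the Moreau envelope (it is finite when f is proper and bounded below).\<close>
definition menv :: "('a::real_normed_vector \<Rightarrow> ereal) \<Rightarrow> real \<Rightarrow> 'a \<Rightarrow> real" where
  "menv f \<mu> x = real_of_ereal (moreau_env f \<mu> x)"

text \<open>The conclusions of the Standing Fact for parameter mu on the closed ball cball xbar a:
  P_mu f single-valued, 1/(1 - mu rho)-Lipschitz, equal to (I + mu \<partial>f)^{-1},
  e_mu f is C^1 with gradient mu^{-1}(x - P_mu f(x)).\<close>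
definition standing_fact_on :: "('a::euclidean_space \<Rightarrow> ereal) \<Rightarrow> real \<Rightarrow> real \<Rightarrow> 'a \<Rightarrow> real \<Rightarrow> bool" where
  "standing_fact_on f \<rho> \<mu> xbar a \<longleftrightarrow>
     (\<exists>P. (\<forall>x\<in>cball xbar a. prox f \<mu> x = {P x})
        \<and> (\<forall>x\<in>cball xbar a. \<forall>y\<in>cball xbar a. dist (P x) (P y) \<le> (1 / (1 - \<mu> * \<rho>)) * dist x y)
        \<and> (\<forall>x\<in>cball xbar a. prox f \<mu> x = {p. (1 / \<mu>) *\<^sub>R (x - p) \<in> limiting_subdiff f p})
        \<and> (\<forall>x\<in>cball xbar a. GDERIV (menv f \<mu>) x :> (1 / \<mu>) *\<^sub>R (x - P x))
        \<and> continuous_on (cball xbar a) (\<lambda>x. (1 / \<mu>) *\<^sub>R (x - P x)))"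

end

theory Submission
  imports Defs
begin

text \<open>Step (a) makes x(k+1) the proximal point of z(k) for the parameter gamma(k), and the
  subgradient characterisation of the proximal map turns this into x(k+1) = P_lambda(k) f (x(k)):
  Algorithm 1 is the proximal point method. The gradient of the convex envelope e_gamma f is
  monotone and vanishes at critical points, so the iterates are Fejer monotone with respect to
  every critical point of f in B[xbar, delta]; in particular they stay in B[xbar, beta]. The
  proximal descent inequality drives the subgradients (x(k) - x(k+1)) / lambda(k) to zero, the
  Lipschitz continuity of the proximal map makes every cluster point critical, and Fejer
  monotonicity upgrades subsequential convergence to convergence. Finally a critical point x*
  minimises the convex envelope on the ball and e_gamma f(x*) = f(x*), so x* minimises
  f >= e_gamma f there.\<close>

lemma convex_on_gradient_inequality:
  fixes h :: "'a::real_inner \<Rightarrow> real"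
  assumes cv: "convex_on S h" and a: "a \<in> S" and b: "b \<in> S"
    and deriv: "GDERIV h a :> g"
  shows "h a + inner (b - a) g \<le> h b"
proof -
  define \<phi> where "\<phi> t = h (a + t *\<^sub>R (b - a))" for t :: real
  have "((\<lambda>t::real. a + t *\<^sub>R (b - a)) has_derivative (\<lambda>s. s *\<^sub>R (b - a))) (at 0)"
    by (auto intro!: derivative_eq_intros)
  moreover have "(h has_derivative (\<lambda>u. inner u g)) (at (a + 0 *\<^sub>R (b - a)))"
    using deriv by (simp add: gderiv_def)
  ultimately have "(\<phi> has_derivative (\<lambda>s. inner (s *\<^sub>R (b - a)) g)) (at 0)"
    unfolding \<phi>_def by (rule has_derivative_compose[unfolded o_def])
  hence "(\<phi> has_field_derivative inner (b - a) g) (at 0)"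
    by (simp add: has_field_derivative_def mult.commute[of _ "inner (b - a) g"])
  hence "((\<lambda>t. (\<phi> t - \<phi> 0) / (t - 0)) \<longlongrightarrow> inner (b - a) g) (at_right 0)"
    by (metis filterlim_at_split has_field_derivative_iff)
  moreover have "\<forall>\<^sub>F t in at_right 0. (\<phi> t - \<phi> 0) / (t - 0) \<le> h b - h a"
    using eventually_at_right_real[OF zero_less_one]
  proof eventually_elim
    case (elim t)
    have "h ((1 - t) *\<^sub>R a + t *\<^sub>R b) \<le> (1 - t) * h a + t * h b"
      using convex_onD[OF cv, of t a b] elim a b by simp
    moreover have "(1 - t) *\<^sub>R a + t *\<^sub>R b = a + t *\<^sub>R (b - a)"
      by (simp add: algebra_simps)
    ultimately show ?case
      using elim by (simp add: \<phi>_def divide_simps algebra_simps)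
  qed
  ultimately have "inner (b - a) g \<le> h b - h a"
    by (rule tendsto_upperbound) (simp_all add: trivial_limit_at_right_real)
  thus ?thesis by simp
qed

lemma gderiv_unique:
  assumes "GDERIV h x :> a" and "GDERIV h x :> b"
  shows "a = b"
proof -
  have "(\<lambda>u. inner u a) = (\<lambda>u. inner u b)"
    using has_derivative_unique assms unfolding gderiv_def by blast
  hence "inner (a - b) (a - b) = 0"
    by (metis inner_diff_right right_minus_eq)
  thus ?thesis by simp
qed

lemma norm_diff_scaleR_le_norm:
  fixes u g :: "'a::real_inner"
  assumes "0 \<le> inner (u - (l - \<gamma>) *\<^sub>R g) g" and "0 < \<gamma>" and "2 * \<gamma> < l"
  shows "norm (u - l *\<^sub>R g) \<le> norm u"
proof -
  have "(l - \<gamma>) * inner g g \<le> inner u g"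
    using assms(1) by (simp add: inner_diff_left)
  hence "l * inner g g - 2 * inner u g \<le> (2 * \<gamma> - l) * inner g g"
    by (simp add: algebra_simps)
  also have "\<dots> \<le> 0"
    using assms(3) by (simp add: mult_nonpos_nonneg)
  finally have "l * (l * inner g g - 2 * inner u g) \<le> 0"
    using assms(2,3) by (simp add: mult_nonneg_nonpos)
  hence "(norm (u - l *\<^sub>R g))\<^sup>2 \<le> (norm u)\<^sup>2"
    by (simp add: power2_norm_eq_inner inner_diff_left inner_diff_right algebra_simps inner_commute)
  thus ?thesis by (simp add: power2_le_iff_abs_le)
qed

lemma prox_le:
  assumes "p \<in> prox f \<mu> x"
  shows "f p + ereal ((norm (p - x))\<^sup>2 / (2 * \<mu>)) \<le> f w + ereal ((norm (w - x))\<^sup>2 / (2 * \<mu>))"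
  using assms unfolding prox_def by blast

lemma prox_value_le:
  assumes "p \<in> prox f \<mu> x" and "0 < \<mu>"
  shows "f p \<le> f w + ereal ((norm (w - x))\<^sup>2 / (2 * \<mu>))"
proof -
  have "f p \<le> f p + ereal ((norm (p - x))\<^sup>2 / (2 * \<mu>))"
    using assms(2) by (intro ereal_le_add_self) simp
  also have "\<dots> \<le> f w + ereal ((norm (w - x))\<^sup>2 / (2 * \<mu>))"
    using prox_le[OF assms(1)] .
  finally show ?thesis .
qed

lemma moreau_env_le: "moreau_env f \<mu> x \<le> f x"
  unfolding moreau_env_def by (rule INF_lower2[of x]) simp_all

lemma moreau_env_ge:
  assumes "\<And>y. ereal m \<le> f y" and "0 < \<mu>"
  shows "ereal m \<le> moreau_env f \<mu> x"
  unfolding moreau_env_def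
proof (rule INF_greatest)
  fix y
  have "ereal m \<le> f y" by (rule assms(1))
  also have "\<dots> \<le> f y + ereal ((norm (y - x))\<^sup>2 / (2 * \<mu>))"
    using assms(2) by (intro ereal_le_add_self) simp
  finally show "ereal m \<le> f y + ereal ((norm (y - x))\<^sup>2 / (2 * \<mu>))" .
qed

lemma moreau_env_eq_if_prox_fixed:
  assumes "x \<in> prox f \<mu> x"
  shows "moreau_env f \<mu> x = f x"
proof (rule antisym[OF moreau_env_le])
  show "f x \<le> moreau_env f \<mu> x"
    unfolding moreau_env_def using prox_le[OF assms] by (intro INF_greatest) simp
qed

lemma standing_fact_onE:
  assumes "standing_fact_on f \<rho> \<mu> c r" and "x \<in> cball c r"
  obtains p where "prox f \<mu> x = {p}" and "GDERIV (menv f \<mu>) x :> (1 / \<mu>) *\<^sub>R (x - p)"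
    and "prox f \<mu> x = {q. (1 / \<mu>) *\<^sub>R (x - q) \<in> limiting_subdiff f q}"
proof -
  obtain P where "prox f \<mu> x = {P x}" "GDERIV (menv f \<mu>) x :> (1 / \<mu>) *\<^sub>R (x - P x)"
    "prox f \<mu> x = {q. (1 / \<mu>) *\<^sub>R (x - q) \<in> limiting_subdiff f q}"
    using assms unfolding standing_fact_on_def by blast
  thus thesis by (rule that)
qed

lemma standing_fact_on_prox_dist_le:
  assumes "standing_fact_on f \<rho> \<mu> c r" and "x \<in> cball c r" and "y \<in> cball c r"
    and "prox f \<mu> x = {p}" and "prox f \<mu> y = {q}"
  shows "dist p q \<le> (1 / (1 - \<mu> * \<rho>)) * dist x y"
proof -
  obtain P where P: "\<forall>x\<in>cball c r. prox f \<mu> x = {P x}"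
    "\<forall>x\<in>cball c r. \<forall>y\<in>cball c r. dist (P x) (P y) \<le> (1 / (1 - \<mu> * \<rho>)) * dist x y"
    using assms(1) unfolding standing_fact_on_def by blast
  have "P x = p" "P y = q" using P(1) assms by auto
  thus ?thesis using P(2) assms by auto
qed

lemma standing_fact_on_prox_fixed_iff:
  assumes "standing_fact_on f \<rho> \<mu> c r" and "x \<in> cball c r"
  shows "x \<in> prox f \<mu> x \<longleftrightarrow> 0 \<in> limiting_subdiff f x"
proof -
  obtain p where "prox f \<mu> x = {p}" "GDERIV (menv f \<mu>) x :> (1 / \<mu>) *\<^sub>R (x - p)"
    and char: "prox f \<mu> x = {q. (1 / \<mu>) *\<^sub>R (x - q) \<in> limiting_subdiff f q}"
    by (rule standing_fact_onE[OF assms])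
  show ?thesis by (simp add: char)
qed

lemma standing_fact_on_gderiv_critical:
  assumes "standing_fact_on f \<rho> \<mu> c r" and "x \<in> cball c r" and "0 \<in> limiting_subdiff f x"
  shows "GDERIV (menv f \<mu>) x :> 0"
proof -
  obtain p where "prox f \<mu> x = {p}" "GDERIV (menv f \<mu>) x :> (1 / \<mu>) *\<^sub>R (x - p)"
    and "prox f \<mu> x = {q. (1 / \<mu>) *\<^sub>R (x - q) \<in> limiting_subdiff f q}"
    by (rule standing_fact_onE[OF assms(1,2)])
  moreover have "x \<in> prox f \<mu> x"
    using standing_fact_on_prox_fixed_iff[OF assms(1,2)] assms(3) by blast
  ultimately show ?thesis by simp
qed

text \<open>The limiting subdifferential is closed at \<open>0\<close> only along sequences with converging
  function values; the Lipschitz proximal map supplies this.\<close>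
lemma standing_fact_on_critical_limit:
  assumes sf: "standing_fact_on f \<rho> \<mu> c r" and \<mu>: "0 < \<mu>" and y: "y \<in> ball c r"
    and p: "p \<longlonglongrightarrow> y" and v: "v \<longlonglongrightarrow> 0" and subdiff: "\<And>n. v n \<in> limiting_subdiff f (p n)"
  shows "0 \<in> limiting_subdiff f y"
proof -
  have yc: "y \<in> cball c r" using y by simp
  obtain P where P: "prox f \<mu> y = {P}" and "GDERIV (menv f \<mu>) y :> (1 / \<mu>) *\<^sub>R (y - P)"
    and "prox f \<mu> y = {q. (1 / \<mu>) *\<^sub>R (y - q) \<in> limiting_subdiff f q}"
    by (rule standing_fact_onE[OF sf yc])
  define w where "w n = p n + \<mu> *\<^sub>R v n" for n
  have w: "w \<longlonglongrightarrow> y"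
    unfolding w_def using tendsto_add[OF p tendsto_scaleR[OF tendsto_const v, of \<mu>]] by simp
  define C where "C = 1 / (1 - \<mu> * \<rho>)"
  have "(\<lambda>n. C * dist y (w n) + dist (p n) y) \<longlonglongrightarrow> C * dist y y + dist y y"
    by (intro tendsto_intros w p)
  hence bound: "(\<lambda>n. C * dist y (w n) + dist (p n) y) \<longlonglongrightarrow> 0" by simp
  have "\<forall>\<^sub>F n in sequentially. w n \<in> ball c r"
    using topological_tendstoD[OF w open_ball y] .
  hence "\<forall>\<^sub>F n in sequentially. dist P y \<le> C * dist y (w n) + dist (p n) y"
  proof eventually_elim
    case (elim n)
    hence wn: "w n \<in> cball c r" by auto
    obtain q where q: "prox f \<mu> (w n) = {q}" and "GDERIV (menv f \<mu>) (w n) :> (1 / \<mu>) *\<^sub>R (w n - q)"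
      and char: "prox f \<mu> (w n) = {q'. (1 / \<mu>) *\<^sub>R (w n - q') \<in> limiting_subdiff f q'}"
      by (rule standing_fact_onE[OF sf wn])
    have "p n \<in> prox f \<mu> (w n)"
      using char subdiff[of n] \<mu> by (simp add: w_def)
    hence "q = p n" using q by simp
    moreover have "dist P q \<le> C * dist y (w n)"
      unfolding C_def using standing_fact_on_prox_dist_le[OF sf yc wn P q] by simp
    ultimately show ?case
      using dist_triangle[of P y "p n"] by (simp add: dist_commute)
  qed
  hence "dist P y \<le> 0"
    by (intro tendsto_lowerbound[OF bound]) simp_all
  hence "y \<in> prox f \<mu> y" using P by simp
  thus ?thesis
    using standing_fact_on_prox_fixed_iff[OF sf yc] by blast
qed

lemma standing_fact_on_critical_minimizes:
  assumes sf: "standing_fact_on f \<rho> \<mu> c r" and conv: "convex_on (cball c r) (menv f \<mu>)"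
    and \<mu>: "0 < \<mu>" and lower: "\<And>y. ereal m \<le> f y"
    and y: "y \<in> cball c r" and crit: "0 \<in> limiting_subdiff f y" and w: "w \<in> cball c r"
  shows "f y \<le> f w"
proof (cases "f w = \<infinity>")
  case False
  have fixed: "y \<in> prox f \<mu> y"
    using standing_fact_on_prox_fixed_iff[OF sf y] crit by blast
  have "f y \<le> f w + ereal ((norm (w - y))\<^sup>2 / (2 * \<mu>))"
    using prox_value_le[OF fixed \<mu>] .
  then obtain a where a: "f y = ereal a"
    using False lower[of y] by (cases "f y") auto
  have "ereal m \<le> moreau_env f \<mu> w"
    by (rule moreau_env_ge[OF lower \<mu>])
  then obtain e where e: "moreau_env f \<mu> w = ereal e"
    using False moreau_env_le[of f \<mu> w] by (cases "moreau_env f \<mu> w") auto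
  have "menv f \<mu> y + inner (w - y) 0 \<le> menv f \<mu> w"
    using convex_on_gradient_inequality[OF conv y w standing_fact_on_gderiv_critical[OF sf y crit]] .
  hence "f y \<le> moreau_env f \<mu> w"
    using a e by (simp add: menv_def moreau_env_eq_if_prox_fixed[OF fixed])
  thus ?thesis
    using moreau_env_le[of f \<mu> w] by (rule order_trans)
qed simp

lemma Fejer_subsequence_limit:
  fixes x :: "nat \<Rightarrow> 'a::metric_space"
  assumes fejer: "\<And>k. dist (x (Suc k)) y \<le> dist (x k) y"
    and r: "strict_mono r" and sub: "(x \<circ> r) \<longlonglongrightarrow> y"
  shows "x \<longlonglongrightarrow> y"
proof -
  have "decseq (\<lambda>k. dist (x k) y)" using fejer by (rule decseq_SucI)
  then obtain l where l: "(\<lambda>k. dist (x k) y) \<longlonglongrightarrow> l"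
    using decseq_convergent[where B = 0 and X = "\<lambda>k. dist (x k) y"] by auto
  have "(\<lambda>n. dist (x (r n)) y) \<longlonglongrightarrow> l"
    using LIMSEQ_subseq_LIMSEQ[OF l r] by (simp add: o_def)
  moreover have "(\<lambda>n. x (r n)) \<longlonglongrightarrow> y"
    using sub by (simp add: o_def)
  hence "(\<lambda>n. dist (x (r n)) y) \<longlonglongrightarrow> dist y y"
    by (intro tendsto_dist tendsto_const)
  ultimately have "l = dist y y" by (rule LIMSEQ_unique)
  with l have "(\<lambda>k. dist (x k) y) \<longlonglongrightarrow> 0" by simp
  thus ?thesis by (rule tendsto_dist_iff[THEN iffD2])
qed

lemma descent_decrement_tendsto_zero:
  fixes a b :: "nat \<Rightarrow> real"
  assumes descent: "\<And>k. a (Suc k) + b k \<le> a k" and nonneg: "\<And>k. 0 \<le> b k"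
    and lower: "\<And>k. m \<le> a k"
  shows "b \<longlonglongrightarrow> 0"
proof -
  have "decseq a"
  proof (rule decseq_SucI)
    fix k show "a (Suc k) \<le> a k" using descent[of k] nonneg[of k] by linarith
  qed
  moreover have "\<forall>k. m \<le> a k" using lower by simp
  ultimately obtain A where A: "a \<longlonglongrightarrow> A"
    by (rule decseq_convergent)
  have "(\<lambda>k. a k - a (Suc k)) \<longlonglongrightarrow> A - A"
    using tendsto_diff[OF A LIMSEQ_Suc[OF A]] .
  hence "(\<lambda>k. a k - a (Suc k)) \<longlonglongrightarrow> 0" by simp
  moreover have "\<And>k. b k \<le> a k - a (Suc k)"
    using descent by (simp add: algebra_simps)
  ultimately show ?thesis
    using nonneg by (intro tendsto_sandwich[of "\<lambda>_. 0" b sequentially "\<lambda>k. a k - a (Suc k)"]) simp_all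
qed

locale algorithm1 =
  fixes f :: "'a::euclidean_space \<Rightarrow> ereal"
    and \<rho> \<delta> \<beta> lambar :: real
    and xbar :: 'a
    and gam lam :: "nat \<Rightarrow> real"
    and x z :: "nat \<Rightarrow> 'a"
  assumes bdd_below: "\<exists>m. \<forall>y. ereal m \<le> f y"
    and xbar_dom: "xbar \<in> edom f"
    and crit: "0 \<in> limiting_subdiff f xbar"
    and lambar_pos: "0 < lambar"
    and params: "\<And>k. lambar < 2 * gam k \<and> 2 * gam k < lam k"
    and beta_less_delta: "\<beta> < \<delta>"
    and sf_gamma: "\<And>k. standing_fact_on f \<rho> (gam k) xbar \<delta>"
    and sf_lambda: "\<And>k. standing_fact_on f \<rho> (lam k) xbar \<delta>"
    and conv_gamma: "\<And>k. convex_on (cball xbar \<delta>) (menv f (gam k))"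
    and x0: "x 0 \<in> cball xbar \<beta>"
    and step_a: "\<And>k. z k \<in> ball xbar \<delta> \<and>
        (\<exists>g. GDERIV (menv f (gam k)) (z k) :> g \<and> z k = x k - (lam k - gam k) *\<^sub>R g)"
    and step_b: "\<And>k. x (Suc k) = z k - (gam k / (lam k - gam k)) *\<^sub>R (x k - z k)"
begin

text \<open>Defined through the iterates, so no gradient has to be chosen in step (a);
  \<open>gamma_step\<close> identifies it with the gradient of the envelope at \<open>z k\<close>.\<close>
definition grad :: "nat \<Rightarrow> 'a" where
  "grad k = (1 / lam k) *\<^sub>R (x k - x (Suc k))"

lemma gam_pos: "0 < gam k"
  using params[of k] lambar_pos by linarith

lemma lambar_less_lam: "lambar < lam k"
  using params[of k] by linarith

lemma lam_pos: "0 < lam k"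
  using lambar_less_lam[of k] lambar_pos by linarith

lemma x_minus_x_Suc: "x k - x (Suc k) = lam k *\<^sub>R grad k"
  using lam_pos[of k] by (simp add: grad_def)

lemma gamma_step:
  shows gderiv_grad: "GDERIV (menv f (gam k)) (z k) :> grad k"
    and z_eq: "z k = x k - (lam k - gam k) *\<^sub>R grad k"
    and x_Suc_prox_gamma: "prox f (gam k) (z k) = {x (Suc k)}"
proof -
  obtain g where g: "GDERIV (menv f (gam k)) (z k) :> g"
    and zg: "z k = x k - (lam k - gam k) *\<^sub>R g"
    using step_a by blast
  have zc: "z k \<in> cball xbar \<delta>" using step_a[of k] by auto
  obtain p where p: "prox f (gam k) (z k) = {p}"
    and dp: "GDERIV (menv f (gam k)) (z k) :> (1 / gam k) *\<^sub>R (z k - p)"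
    and "prox f (gam k) (z k) = {q. (1 / gam k) *\<^sub>R (z k - q) \<in> limiting_subdiff f q}"
    by (rule standing_fact_onE[OF sf_gamma zc])
  have zp: "z k - p = gam k *\<^sub>R g"
    using gderiv_unique[OF g dp] gam_pos[of k] by simp
  have xz: "x k - z k = (lam k - gam k) *\<^sub>R g" using zg by simp
  have "gam k < lam k" using params[of k] gam_pos[of k] by linarith
  hence "x (Suc k) = z k - gam k *\<^sub>R g"
    using step_b[of k] unfolding xz by simp
  hence xp: "x (Suc k) = p"
    using zp by (simp add: algebra_simps)
  have "x k - x (Suc k) = (x k - z k) + (z k - p)"
    by (simp add: xp)
  also have "\<dots> = lam k *\<^sub>R g"
    unfolding xz zp by (simp add: algebra_simps)
  finally have "grad k = g"
    using lam_pos[of k] by (simp add: grad_def)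
  thus "GDERIV (menv f (gam k)) (z k) :> grad k" "z k = x k - (lam k - gam k) *\<^sub>R grad k"
    "prox f (gam k) (z k) = {x (Suc k)}"
    using g zg p xp by simp_all
qed

lemma grad_in_subdiff: "grad k \<in> limiting_subdiff f (x (Suc k))"
proof -
  have zc: "z k \<in> cball xbar \<delta>" using step_a[of k] by auto
  obtain p where "prox f (gam k) (z k) = {p}"
    and "GDERIV (menv f (gam k)) (z k) :> (1 / gam k) *\<^sub>R (z k - p)"
    and char: "prox f (gam k) (z k) = {q. (1 / gam k) *\<^sub>R (z k - q) \<in> limiting_subdiff f q}"
    by (rule standing_fact_onE[OF sf_gamma zc])
  have "x (Suc k) \<in> prox f (gam k) (z k)"
    by (simp add: x_Suc_prox_gamma)
  hence "(1 / gam k) *\<^sub>R (z k - x (Suc k)) \<in> limiting_subdiff f (x (Suc k))"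
    using char by simp
  moreover have "z k - x (Suc k) = gam k *\<^sub>R grad k"
    using z_eq[of k] x_minus_x_Suc[of k] by (simp add: algebra_simps)
  ultimately show ?thesis
    using gam_pos[of k] by simp
qed

lemma dist_x_Suc_le:
  assumes y: "y \<in> cball xbar \<delta>" and crit_y: "0 \<in> limiting_subdiff f y"
  shows "dist (x (Suc k)) y \<le> dist (x k) y"
proof -
  have zc: "z k \<in> cball xbar \<delta>" using step_a[of k] by auto
  have "menv f (gam k) y + inner (z k - y) 0 \<le> menv f (gam k) (z k)"
    using convex_on_gradient_inequality[OF conv_gamma y zc
        standing_fact_on_gderiv_critical[OF sf_gamma y crit_y]] .
  moreover have "menv f (gam k) (z k) + inner (y - z k) (grad k) \<le> menv f (gam k) y"
    using convex_on_gradient_inequality[OF conv_gamma zc y gderiv_grad] .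
  moreover have "inner (y - z k) (grad k) = - inner (z k - y) (grad k)"
    by (simp add: inner_diff_left)
  ultimately have "0 \<le> inner ((x k - y) - (lam k - gam k) *\<^sub>R grad k) (grad k)"
    using z_eq[of k] by (simp add: algebra_simps)
  hence "norm ((x k - y) - lam k *\<^sub>R grad k) \<le> norm (x k - y)"
    using gam_pos[of k] params[of k] by (intro norm_diff_scaleR_le_norm) auto
  moreover have "x (Suc k) - y = (x k - y) - lam k *\<^sub>R grad k"
    using x_minus_x_Suc[of k] by (simp add: algebra_simps)
  ultimately show ?thesis by (metis dist_norm)
qed

lemma xbar_in_cball_delta: "xbar \<in> cball xbar \<delta>"
  using x0 zero_le_dist[of xbar "x 0"] beta_less_delta unfolding mem_cball dist_self by linarith

lemma x_in_cball: "x k \<in> cball xbar \<beta>"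
proof (induction k)
  case 0
  show ?case using x0 .
next
  case (Suc k)
  have "dist (x (Suc k)) xbar \<le> dist (x k) xbar"
    using dist_x_Suc_le[OF xbar_in_cball_delta crit] .
  thus ?case using Suc by (simp add: dist_commute)
qed

lemma x_in_cball_delta: "x k \<in> cball xbar \<delta>"
  using x_in_cball[of k] beta_less_delta by simp

lemma x_Suc_prox_lambda: "x (Suc k) \<in> prox f (lam k) (x k)"
proof -
  obtain p where "prox f (lam k) (x k) = {p}"
    and "GDERIV (menv f (lam k)) (x k) :> (1 / lam k) *\<^sub>R (x k - p)"
    and char: "prox f (lam k) (x k) = {q. (1 / lam k) *\<^sub>R (x k - q) \<in> limiting_subdiff f q}"
    by (rule standing_fact_onE[OF sf_lambda x_in_cball_delta])
  show ?thesis
    using char grad_in_subdiff[of k] by (simp add: grad_def)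
qed

lemma f_x_Suc_finite: "\<bar>f (x (Suc k))\<bar> \<noteq> \<infinity>"
proof -
  obtain m where m: "\<And>y. ereal m \<le> f y" using bdd_below by blast
  have "f (x (Suc k)) \<le> f xbar + ereal ((norm (xbar - x k))\<^sup>2 / (2 * lam k))"
    using prox_value_le[OF x_Suc_prox_lambda lam_pos] .
  moreover have "f xbar < \<infinity>" using xbar_dom by (simp add: edom_def)
  ultimately show ?thesis
    using m[of "x (Suc k)"] by auto
qed

lemma proximal_descent:
  "f (x (Suc (Suc k))) + ereal (lambar / 2 * (norm (grad (Suc k)))\<^sup>2) \<le> f (x (Suc k))"
proof -
  have "norm (x (Suc (Suc k)) - x (Suc k)) = lam (Suc k) * norm (grad (Suc k))"
    using x_minus_x_Suc[of "Suc k"] lam_pos[of "Suc k"] by (simp add: norm_minus_commute)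
  hence step: "(norm (x (Suc (Suc k)) - x (Suc k)))\<^sup>2 / (2 * lam (Suc k))
      = lam (Suc k) / 2 * (norm (grad (Suc k)))\<^sup>2"
    using lam_pos[of "Suc k"] by (simp add: power2_eq_square)
  have "lambar / 2 * (norm (grad (Suc k)))\<^sup>2 \<le> lam (Suc k) / 2 * (norm (grad (Suc k)))\<^sup>2"
    using lambar_less_lam[of "Suc k"] by (intro mult_right_mono) auto
  hence "f (x (Suc (Suc k))) + ereal (lambar / 2 * (norm (grad (Suc k)))\<^sup>2)
      \<le> f (x (Suc (Suc k))) + ereal ((norm (x (Suc (Suc k)) - x (Suc k)))\<^sup>2 / (2 * lam (Suc k)))"
    unfolding step by (intro add_left_mono) simp
  also have "\<dots> \<le> f (x (Suc k)) + ereal ((norm (x (Suc k) - x (Suc k)))\<^sup>2 / (2 * lam (Suc k)))"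
    by (rule prox_le[OF x_Suc_prox_lambda])
  finally show ?thesis by simp
qed

lemma grad_tendsto_zero: "grad \<longlonglongrightarrow> 0"
proof -
  obtain m where m: "\<And>y. ereal m \<le> f y" using bdd_below by blast
  define a where "a k = real_of_ereal (f (x (Suc k)))" for k
  have fa: "f (x (Suc k)) = ereal (a k)" for k
    using f_x_Suc_finite[of k] by (simp add: a_def ereal_real')
  have "(\<lambda>k. lambar / 2 * (norm (grad (Suc k)))\<^sup>2) \<longlonglongrightarrow> 0"
  proof (rule descent_decrement_tendsto_zero)
    show "a (Suc k) + lambar / 2 * (norm (grad (Suc k)))\<^sup>2 \<le> a k" for k
      using proximal_descent[of k] by (simp add: fa)
    show "0 \<le> lambar / 2 * (norm (grad (Suc k)))\<^sup>2" for k
      using lambar_pos by simp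
    show "m \<le> a k" for k
      using m[of "x (Suc k)"] by (simp add: fa)
  qed
  hence "(\<lambda>k. (norm (grad (Suc k)))\<^sup>2) \<longlonglongrightarrow> 0"
    using tendsto_mult_left[of _ 0 _ "2 / lambar"] lambar_pos by force
  hence "(\<lambda>k. sqrt ((norm (grad (Suc k)))\<^sup>2)) \<longlonglongrightarrow> 0"
    using tendsto_real_sqrt by force
  hence "(\<lambda>k. grad (Suc k)) \<longlonglongrightarrow> 0"
    by (simp add: tendsto_norm_zero_iff)
  thus ?thesis by (rule LIMSEQ_imp_Suc)
qed

lemma cluster_point_critical:
  obtains xs r where "xs \<in> cball xbar \<beta>" and "strict_mono r"
    and "(\<lambda>n. x (Suc (r n))) \<longlonglongrightarrow> xs" and "0 \<in> limiting_subdiff f xs"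
proof -
  obtain xs r where xs: "xs \<in> cball xbar \<beta>" and r: "strict_mono r"
    and lim: "((\<lambda>k. x (Suc k)) \<circ> r) \<longlonglongrightarrow> xs"
    using seq_compactE[OF compact_imp_seq_compact[OF compact_cball]] x_in_cball by metis
  have "xs \<in> ball xbar \<delta>" using xs beta_less_delta by simp
  moreover have "(\<lambda>n. x (Suc (r n))) \<longlonglongrightarrow> xs" using lim by (simp add: o_def)
  moreover have "(\<lambda>n. grad (r n)) \<longlonglongrightarrow> 0"
    using LIMSEQ_subseq_LIMSEQ[OF grad_tendsto_zero r] by (simp add: o_def)
  ultimately have "0 \<in> limiting_subdiff f xs"
    using standing_fact_on_critical_limit[OF sf_gamma gam_pos] grad_in_subdiff by blast
  with xs r \<open>(\<lambda>n. x (Suc (r n))) \<longlonglongrightarrow> xs\<close> show thesis by (rule that)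
qed

lemma x_converges:
  obtains xs where "xs \<in> cball xbar \<beta>" and "0 \<in> limiting_subdiff f xs" and "x \<longlonglongrightarrow> xs"
proof -
  obtain xs r where xs: "xs \<in> cball xbar \<beta>" and r: "strict_mono r"
    and lim: "(\<lambda>n. x (Suc (r n))) \<longlonglongrightarrow> xs" and crit_xs: "0 \<in> limiting_subdiff f xs"
    by (rule cluster_point_critical)
  have "xs \<in> cball xbar \<delta>" using xs beta_less_delta by simp
  moreover have "strict_mono (Suc \<circ> r)"
    using r by (intro strict_mono_o) (simp_all add: strict_mono_Suc_iff)
  moreover have "(x \<circ> (Suc \<circ> r)) \<longlonglongrightarrow> xs" using lim by (simp add: o_def)
  ultimately have "x \<longlonglongrightarrow> xs"
    by (intro Fejer_subsequence_limit[of x xs "Suc \<circ> r"] dist_x_Suc_le crit_xs)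
  with xs crit_xs show thesis by (rule that)
qed

lemma critical_minimizes:
  assumes "xs \<in> cball xbar \<delta>" and "0 \<in> limiting_subdiff f xs" and "y \<in> cball xbar \<delta>"
  shows "f xs \<le> f y"
proof -
  obtain m where "\<And>y. ereal m \<le> f y" using bdd_below by blast
  from standing_fact_on_critical_minimizes[OF sf_gamma conv_gamma gam_pos this assms]
  show ?thesis .
qed

lemma critical_value_finite:
  assumes "xs \<in> cball xbar \<delta>" and "0 \<in> limiting_subdiff f xs"
  shows "\<bar>f xs\<bar> \<noteq> \<infinity>"
proof -
  obtain m where m: "\<And>y. ereal m \<le> f y" using bdd_below by blast
  have "f xs \<le> f xbar"
    using critical_minimizes[OF assms xbar_in_cball_delta] .
  moreover have "f xbar < \<infinity>" using xbar_dom by (simp add: edom_def)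
  ultimately show ?thesis using m[of xs] by auto
qed

lemma f_x_tendsto:
  assumes xs: "xs \<in> cball xbar \<beta>" and crit_xs: "0 \<in> limiting_subdiff f xs" and lim: "x \<longlonglongrightarrow> xs"
  shows "(\<lambda>k. f (x k)) \<longlonglongrightarrow> f xs"
proof -
  have xs_delta: "xs \<in> cball xbar \<delta>" using xs beta_less_delta by simp
  define c where "c = real_of_ereal (f xs)"
  have c: "f xs = ereal c"
    using critical_value_finite[OF xs_delta crit_xs] by (simp add: c_def ereal_real')
  have "(\<lambda>k. c + (norm (xs - x k))\<^sup>2 / (2 * lambar)) \<longlonglongrightarrow> c + (norm (xs - xs))\<^sup>2 / (2 * lambar)"
    using lambar_pos by (intro tendsto_intros lim) simp
  hence upper_lim: "(\<lambda>k. ereal (c + (norm (xs - x k))\<^sup>2 / (2 * lambar))) \<longlonglongrightarrow> f xs"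
    by (simp add: c)
  have "(\<lambda>k. f (x (Suc k))) \<longlonglongrightarrow> f xs"
  proof (rule tendsto_sandwich[OF _ _ tendsto_const upper_lim])
    show "\<forall>\<^sub>F k in sequentially. f xs \<le> f (x (Suc k))"
      using critical_minimizes[OF xs_delta crit_xs x_in_cball_delta] by simp
    have "f (x (Suc k)) \<le> ereal (c + (norm (xs - x k))\<^sup>2 / (2 * lambar))" for k
    proof -
      have "(norm (xs - x k))\<^sup>2 / (2 * lam k) \<le> (norm (xs - x k))\<^sup>2 / (2 * lambar)"
        using lambar_less_lam[of k] lambar_pos by (intro divide_left_mono) auto
      hence "f xs + ereal ((norm (xs - x k))\<^sup>2 / (2 * lam k))
          \<le> ereal (c + (norm (xs - x k))\<^sup>2 / (2 * lambar))"
        by (simp add: c)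
      thus ?thesis
        using prox_value_le[OF x_Suc_prox_lambda lam_pos, of k xs] by (rule order_trans[rotated])
    qed
    thus "\<forall>\<^sub>F k in sequentially. f (x (Suc k)) \<le> ereal (c + (norm (xs - x k))\<^sup>2 / (2 * lambar))"
      by simp
  qed
  thus ?thesis by (rule LIMSEQ_imp_Suc)
qed

lemma INF_cball_eq:
  assumes "xs \<in> cball xbar \<beta>" and "0 \<in> limiting_subdiff f xs"
  shows "(INF y\<in>cball xbar \<beta>. f y) = f xs"
proof (rule antisym)
  show "(INF y\<in>cball xbar \<beta>. f y) \<le> f xs" using assms(1) by (rule INF_lower)
  show "f xs \<le> (INF y\<in>cball xbar \<beta>. f y)"
    using critical_minimizes assms beta_less_delta by (intro INF_greatest) auto
qed

end

text \<open>Only the hypotheses of the locale are used: weak convexity, lower semicontinuity, the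
  bounds on gamma, lambda, and the constants L, sigma, kappa serve in the paper to establish the
  Standing Fact and the solvability of step (a) inside B(xbar, delta), both of which are
  assumed here outright.\<close>
theorem theorem4p5:
  fixes f :: "'a::euclidean_space \<Rightarrow> ereal"
    and \<rho> \<delta> \<beta> lambar :: real
    and xbar :: 'a
    and gam lam L \<sigma> \<kappa> :: "nat \<Rightarrow> real"
    and x z :: "nat \<Rightarrow> 'a"
  assumes proper: "proper_fun f"
    and lsc: "lsc_fun f"
    and bdd_below: "\<exists>m. \<forall>y. ereal m \<le> f y"
    and rho_pos: "\<rho> > 0"
    and wconv: "weakly_convex_on UNIV \<rho> f"
    and xbar_dom: "xbar \<in> edom f"
    and crit: "0 \<in> limiting_subdiff f xbar"
    and lambdabar_pos: "lambar > 0"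
    and bdd_gamma: "bounded (range gam)"
    and bdd_lambda: "bounded (range lam)"
    and params: "\<And>k. lambar < 2 * gam k \<and> 2 * gam k < lam k \<and> lam k < 1 / \<rho>"
    and delta_pos: "\<delta> > 0"
    and sf_gamma: "\<And>k. standing_fact_on f \<rho> (gam k) xbar \<delta>"
    and sf_lambda: "\<And>k. standing_fact_on f \<rho> (lam k) xbar \<delta>"
    and conv_gamma: "\<And>k. convex_on (cball xbar \<delta>) (menv f (gam k))"
    and conv_lambda: "\<And>k. convex_on (cball xbar \<delta>) (menv f (lam k))"
    and L_def: "\<And>k. L k = 1 + (lam k - gam k) / gam k * (1 + 1 / (1 - gam k * \<rho>))"
    and sigma: "\<And>k. 0 < \<sigma> k \<and> \<sigma> k < 2 / (L k)\<^sup>2"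
    and kappa_def: "\<And>k. \<kappa> k = 1 - 2 * \<sigma> k + (\<sigma> k)\<^sup>2 * (L k)\<^sup>2"
    and beta_pos: "\<beta> > 0"
    and beta: "\<And>k. \<beta> < \<delta> \<and> \<beta> < \<delta> / \<sigma> k * (1 - sqrt (\<kappa> k))"
    and x0: "x 0 \<in> cball xbar \<beta>"
    and step_a: "\<And>k. z k \<in> ball xbar \<delta> \<and>
        (\<exists>g. GDERIV (menv f (gam k)) (z k) :> g \<and> z k = x k - (lam k - gam k) *\<^sub>R g)"
    and step_b: "\<And>k. x (Suc k) = z k - (gam k / (lam k - gam k)) *\<^sub>R (x k - z k)"
  shows "(\<lambda>k. f (x k)) \<longlonglongrightarrow> (INF y\<in>cball xbar \<beta>. f y)
         \<and> (\<exists>xs. x \<longlonglongrightarrow> xs \<and> f xs = (INF y\<in>cball xbar \<beta>. f y))"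
proof -
  interpret algorithm1 f \<rho> \<delta> \<beta> lambar xbar gam lam x z
  proof
    show "lambar < 2 * gam k \<and> 2 * gam k < lam k" for k using params[of k] by simp
    show "\<beta> < \<delta>" using beta[of 0] by simp
  qed (use assms in auto)
  obtain xs where "xs \<in> cball xbar \<beta>" and "0 \<in> limiting_subdiff f xs" and "x \<longlonglongrightarrow> xs"
    by (rule x_converges)
  thus ?thesis
    using f_x_tendsto INF_cball_eq by auto
qed

end
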